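(* Let $G$ be a group, $\nu$ a conjugation-invariant pseudo-norm on $G$, and $H\in\mathsf{FM}(G)$. For any $\hat\phi\in L(G,\nu)$, the function $\phi\colon G\to\mathbb{R}$, $\phi(g)=\hat\phi([g^1])$, is a homogeneous $H$-quasimorphism, and $D(\phi)\le 8\,l(\hat\phi)\cdot E_{H,\nu}(H)$, where $l(\hat\phi)$ is the optimal Lipschitz constant of $\hat\phi$.
   Context: A conjugation-invariant pseudo-norm on a group $G$ is a function $\nu\colon G\to\mathbb{R}_{\ge0}$ with $\nu(1)=0$, $\nu(f)=\nu(f^{-1})$, $\nu(fg)\le\nu(f)+\nu(g)$ and $\nu(gfg^{-1})=\nu(f)$ for all $f,g\in G$. For a subgroup $H\le G$, $\nu_H(f)$ is the minimal $k$ such that $f=g_1h_1g_1^{-1}\cdots g_kh_kg_k^{-1}$ ($g_i\in G,h_i\in H$), $\infty$ if none. A function $\phi\colon G\to\mathbb{R}$ is an $H$-quasimorphism if there is $C>0$ with $|\phi(fg)-\phi(f)-\phi(g)|<C\min\{\nu_H(f),\nu_H(g)\}$ for all $f,g$; the infimum of such $C$ is $D(\phi)$; $\phi$ is homogeneous if $\phi(f^n)=n\phi(f)$ for all $n\in\mathbb{Z}$. For $K\subset G$, $\mathrm{D}^f_H(K)$ is the set of $h_0\in G$ such that for all $g_1,\dots,g_k\in G$ there is $h\in G$ with every element of $hh_0h^{-1}K(hh_0h^{-1})^{-1}$ commuting with every element of $\bigcup_i g_iHg_i^{-1}$; $E_{H,\nu}(K)=\inf_{h_0\in\mathrm{D}^f_H(K)}\nu(h_0)$.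 $(G,H)$ satisfies $\mathsf{FM}$ if $\nu_H<\infty$ on $G$ and $\mathrm{D}^f_H(h_1Hh_1^{-1}\cup\dots\cup h_kHh_k^{-1})\ne\emptyset$ for all $h_1,\dots,h_k\in G$; $\mathsf{FM}(G)$ is the set of such subgroups $H$. $A_G=\coprod_{k\ge0}(G\times\mathbb{R})^k$, elements written as formal words $g_1^{s_1}\cdots g_k^{s_k}$, empty word $1$; $\mathtt{g}\cdot\mathtt{h}$ is concatenation, $\bar{\mathtt{g}}=g_k^{-s_k}\cdots g_1^{-s_1}$, $\mathtt{g}^{(\lambda)}=g_1^{\lambda s_1}\cdots g_k^{\lambda s_k}$; $\|\mathtt{g}\|_\nu=\lim_{n\to\infty}\frac1n\nu(g_1^{[s_1n]}\cdots g_k^{[s_kn]})$ ($[\cdot]$ integer part), $\|1\|_\nu=0$; $\mathtt{g}\sim\mathtt{h}$ iff $\|\mathtt{g}\cdot\bar{\mathtt{h}}\|_\nu=0$; $A_\nu=A_G/\sim$ is a real normed vector space with $[\mathtt{g}]+[\mathtt{h}]=[\mathtt{g}\cdot\mathtt{h}]$, $\lambda[\mathtt{g}]=[\mathtt{g}^{(\lambda)}]$, norm $\|[\mathtt{g}]\|_\nu=\|\mathtt{g}\|_\nu$. $L(G,\nu)$ is the set of Lipschitz continuous linear maps $A_\nu\to\mathbb{R}$; $[g^1]$ is the class of the one-letter word $g^1$. *)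

theory Defs
  imports "HOL-Algebra.Group" "HOL-Library.Extended_Nat" Complex_Main
begin

definition conj_pseudo_norm :: "('a, 'b) monoid_scheme \<Rightarrow> ('a \<Rightarrow> real) \<Rightarrow> bool" where
  "conj_pseudo_norm G \<nu> \<longleftrightarrow>
     (\<forall>f\<in>carrier G. \<nu> f \<ge> 0) \<and> \<nu> \<one>\<^bsub>G\<^esub> = 0 \<and>
     (\<forall>f\<in>carrier G. \<nu> (inv\<^bsub>G\<^esub> f) = \<nu> f) \<and>
     (\<forall>f\<in>carrier G. \<forall>g\<in>carrier G. \<nu> (f \<otimes>\<^bsub>G\<^esub> g) \<le> \<nu> f + \<nu> g) \<and>
     (\<forall>f\<in>carrier G. \<forall>g\<in>carrier G. \<nu> (g \<otimes>\<^bsub>G\<^esub> f \<otimes>\<^bsub>G\<^esub> inv\<^bsub>G\<^esub> g) = \<nu> f)"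

definition conj_prod :: "('a, 'b) monoid_scheme \<Rightarrow> ('a \<times> 'a) list \<Rightarrow> 'a" where
  "conj_prod G ps = foldr (\<lambda>(g, h) x. g \<otimes>\<^bsub>G\<^esub> h \<otimes>\<^bsub>G\<^esub> inv\<^bsub>G\<^esub> g \<otimes>\<^bsub>G\<^esub> x) ps \<one>\<^bsub>G\<^esub>"

text \<open>nu_H(f): minimal k, infinity if none (Inf of the empty set of enat is infinity).\<close>
definition nuH :: "('a, 'b) monoid_scheme \<Rightarrow> 'a set \<Rightarrow> 'a \<Rightarrow> enat" where
  "nuH G H f = Inf {enat (length ps) | ps. set ps \<subseteq> carrier G \<times> H \<and> f = conj_prod G ps}"

definition H_quasimorphism_bound :: "('a, 'b) monoid_scheme \<Rightarrow> 'a set \<Rightarrow> ('a \<Rightarrow> real) \<Rightarrow> real \<Rightarrow> bool" where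
  "H_quasimorphism_bound G H \<phi> C \<longleftrightarrow>
     (\<forall>f\<in>carrier G. \<forall>g\<in>carrier G. min (nuH G H f) (nuH G H g) \<noteq> \<infinity> \<longrightarrow>
        \<bar>\<phi> (f \<otimes>\<^bsub>G\<^esub> g) - \<phi> f - \<phi> g\<bar> \<le> C * real (the_enat (min (nuH G H f) (nuH G H g))))"

definition H_quasimorphism :: "('a, 'b) monoid_scheme \<Rightarrow> 'a set \<Rightarrow> ('a \<Rightarrow> real) \<Rightarrow> bool" where
  "H_quasimorphism G H \<phi> \<longleftrightarrow> (\<exists>C>0. H_quasimorphism_bound G H \<phi> C)"

definition qm_defect :: "('a, 'b) monoid_scheme \<Rightarrow> 'a set \<Rightarrow> ('a \<Rightarrow> real) \<Rightarrow> real" where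
  "qm_defect G H \<phi> = Inf {C. C > 0 \<and> H_quasimorphism_bound G H \<phi> C}"

definition homogeneous :: "('a, 'b) monoid_scheme \<Rightarrow> ('a \<Rightarrow> real) \<Rightarrow> bool" where
  "homogeneous G \<phi> \<longleftrightarrow> (\<forall>f\<in>carrier G. \<forall>n::int. \<phi> (f [^]\<^bsub>G\<^esub> n) = real_of_int n * \<phi> f)"

definition conj_set :: "('a, 'b) monoid_scheme \<Rightarrow> 'a \<Rightarrow> 'a set \<Rightarrow> 'a set" where
  "conj_set G g K = (\<lambda>k. g \<otimes>\<^bsub>G\<^esub> k \<otimes>\<^bsub>G\<^esub> inv\<^bsub>G\<^esub> g) ` K"

definition Df :: "('a, 'b) monoid_scheme \<Rightarrow> 'a set \<Rightarrow> 'a set \<Rightarrow> 'a set" where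
  "Df G H K = {h0 \<in> carrier G. \<forall>gs. set gs \<subseteq> carrier G \<longrightarrow>
      (\<exists>h\<in>carrier G. \<forall>x\<in>conj_set G (h \<otimes>\<^bsub>G\<^esub> h0 \<otimes>\<^bsub>G\<^esub> inv\<^bsub>G\<^esub> h) K.
          \<forall>y\<in>(\<Union>g\<in>set gs. conj_set G g H). x \<otimes>\<^bsub>G\<^esub> y = y \<otimes>\<^bsub>G\<^esub> x)}"

definition E_Hnu :: "('a, 'b) monoid_scheme \<Rightarrow> 'a set \<Rightarrow> ('a \<Rightarrow> real) \<Rightarrow> 'a set \<Rightarrow> real" where
  "E_Hnu G H \<nu> K = Inf (\<nu> ` Df G H K)"

definition FM :: "('a, 'b) monoid_scheme \<Rightarrow> 'a set \<Rightarrow> bool" where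
  "FM G H \<longleftrightarrow> subgroup H G \<and> (\<forall>f\<in>carrier G. nuH G H f \<noteq> \<infinity>) \<and>
     (\<forall>hs. set hs \<subseteq> carrier G \<longrightarrow> Df G H (\<Union>h\<in>set hs. conj_set G h H) \<noteq> {})"

text \<open>The space A_G of formal words g1^s1 ... gk^sk, as lists of pairs.\<close>
definition word :: "('a, 'b) monoid_scheme \<Rightarrow> ('a \<times> real) list \<Rightarrow> bool" where
  "word G w \<longleftrightarrow> set w \<subseteq> carrier G \<times> UNIV"

definition word_pow :: "('a, 'b) monoid_scheme \<Rightarrow> ('a \<times> real) list \<Rightarrow> nat \<Rightarrow> 'a" where
  "word_pow G w n = foldr (\<lambda>(g, s) x. (g [^]\<^bsub>G\<^esub> (\<lfloor>s * real n\<rfloor>)) \<otimes>\<^bsub>G\<^esub> x) w \<one>\<^bsub>G\<^esub>"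

definition wnorm :: "('a, 'b) monoid_scheme \<Rightarrow> ('a \<Rightarrow> real) \<Rightarrow> ('a \<times> real) list \<Rightarrow> real" where
  "wnorm G \<nu> w = lim (\<lambda>n. \<nu> (word_pow G w n) / real n)"

definition wbar :: "('a \<times> real) list \<Rightarrow> ('a \<times> real) list" where
  "wbar w = rev (map (\<lambda>(g, s). (g, - s)) w)"

definition wscale :: "real \<Rightarrow> ('a \<times> real) list \<Rightarrow> ('a \<times> real) list" where
  "wscale r w = map (\<lambda>(g, s). (g, r * s)) w"

definition is_lip_const :: "('a, 'b) monoid_scheme \<Rightarrow> ('a \<Rightarrow> real) \<Rightarrow> (('a \<times> real) list \<Rightarrow> real) \<Rightarrow> real \<Rightarrow> bool" where
  "is_lip_const G \<nu> \<psi> c \<longleftrightarrow> c \<ge> 0 \<and>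
     (\<forall>w w'. word G w \<longrightarrow> word G w' \<longrightarrow> \<bar>\<psi> w - \<psi> w'\<bar> \<le> c * wnorm G \<nu> (w @ wbar w'))"

text \<open>L(G,nu): Lipschitz linear maps A_nu -> R, represented by their lifts to words
  (functions on words constant on ~-classes, additive, homogeneous).\<close>
definition L_Gnu :: "('a, 'b) monoid_scheme \<Rightarrow> ('a \<Rightarrow> real) \<Rightarrow> (('a \<times> real) list \<Rightarrow> real) set" where
  "L_Gnu G \<nu> = {\<psi>.
     (\<forall>w w'. word G w \<longrightarrow> word G w' \<longrightarrow> wnorm G \<nu> (w @ wbar w') = 0 \<longrightarrow> \<psi> w = \<psi> w') \<and>
     (\<forall>w w'. word G w \<longrightarrow> word G w' \<longrightarrow> \<psi> (w @ w') = \<psi> w + \<psi> w') \<and>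
     (\<forall>w r. word G w \<longrightarrow> \<psi> (wscale r w) = r * \<psi> w) \<and>
     (\<exists>c. is_lip_const G \<nu> \<psi> c)}"

definition lip_const :: "('a, 'b) monoid_scheme \<Rightarrow> ('a \<Rightarrow> real) \<Rightarrow> (('a \<times> real) list \<Rightarrow> real) \<Rightarrow> real" where
  "lip_const G \<nu> \<psi> = Inf {c. is_lip_const G \<nu> \<psi> c}"

end

theory Submission
  imports Defs
begin

text \<open>
  Conjugation invariance of \<open>\<nu>\<close> makes \<open>\<phi>\<close> a class function, and homogeneity is
  inherited from the linearity of \<open>\<psi>\<close>. The key estimate: for \<open>p \<in> G\<close> and \<open>q \<in> H\<close>,
  pick a conjugate \<open>u\<close> of \<open>h\<^sub>0 \<in> D\<^sup>f\<^sub>H(H)\<close> such that \<open>u q u\<inverse>\<close> commutes with \<open>p\<close>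
  (possible because \<open>p\<close> is a finite product of conjugates of elements of \<open>H\<close>); then
  \<open>[p, q] = [p, [q, u]]\<close>, so \<open>\<nu>([p, q]) \<le> 4 \<nu>(h\<^sub>0)\<close>. For \<open>y \<in> H\<close> the elements
  \<open>T\<^sub>n = (yg)\<^sup>n g\<^sup>-\<^sup>n y\<^sup>-\<^sup>n\<close> therefore satisfy \<open>\<nu>(T\<^sub>n\<^sub>+\<^sub>m) \<le> \<nu>(T\<^sub>n) + \<nu>(T\<^sub>m) + 4 \<nu>(h\<^sub>0)\<close>,
  so by Fekete's lemma the word \<open>(yg)\<^sup>1 g\<^sup>-\<^sup>1 y\<^sup>-\<^sup>1\<close> has norm at most \<open>4 \<nu>(h\<^sub>0)\<close>, and the
  Lipschitz bound gives \<open>|\<phi>(yg) - \<phi>(y) - \<phi>(g)| \<le> 4 l \<nu>(h\<^sub>0)\<close>. Writing \<open>f\<close> as a product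
  of \<open>\<nu>\<^sub>H(f)\<close> conjugates of elements of \<open>H\<close> and telescoping, with two such estimates
  per factor, gives the defect bound \<open>8 l \<nu>(h\<^sub>0) \<nu>\<^sub>H(f)\<close>.
\<close>

section \<open>Subadditive sequences\<close>

lemma subadditive_mult_add_le:
  fixes a :: "nat \<Rightarrow> real"
  assumes sub: "\<And>n m. a (n + m) \<le> a n + a m"
  shows "a (q * m + r) \<le> real q * a m + a r"
proof (induction q)
  case 0
  then show ?case by simp
next
  case (Suc q)
  have "a (Suc q * m + r) = a (m + (q * m + r))" by (simp add: add.assoc)
  also have "\<dots> \<le> a m + a (q * m + r)" by (rule sub)
  finally show ?case using Suc by (simp add: algebra_simps)
qed

lemma subadditive_div_le:
  fixes a :: "nat \<Rightarrow> real"
  assumes nonneg: "\<And>n. 0 \<le> a n" and sub: "\<And>n m. a (n + m) \<le> a n + a m"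
    and "0 < m" "0 < n"
  shows "a n / real n \<le> a m / real m + (\<Sum>k<m. a k) / real n"
proof -
  have rem: "a (n mod m) \<le> (\<Sum>k<m. a k)"
    using member_le_sum[of "n mod m" "{..<m}" a] nonneg \<open>0 < m\<close> by simp
  have "real (n div m) * a m = real (n div m * m) * (a m / real m)"
    using \<open>0 < m\<close> by simp
  also have "\<dots> \<le> real n * (a m / real m)"
    using div_times_less_eq_dividend[of n m] nonneg[of m]
    by (intro mult_right_mono) (simp_all only: of_nat_le_iff, simp)
  finally have "a n \<le> real n * (a m / real m) + (\<Sum>k<m. a k)"
    using subadditive_mult_add_le[of a "n div m" m "n mod m", OF sub] rem by simp
  then show ?thesis using \<open>0 < n\<close> by (simp add: field_simps)
qed

lemma Fekete_subadditive_convergent: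
  fixes a :: "nat \<Rightarrow> real"
  assumes nonneg: "\<And>n. 0 \<le> a n" and sub: "\<And>n m. a (n + m) \<le> a n + a m"
  shows "convergent (\<lambda>n. a n / real n)"
proof -
  define L where "L = (INF n\<in>{1..}. a n / real n)"
  have bdd: "bdd_below ((\<lambda>n. a n / real n) ` {1..})"
    using nonneg by (intro bdd_belowI2[of _ 0]) simp
  have "(\<lambda>n. a n / real n) \<longlonglongrightarrow> L"
  proof (rule LIMSEQ_I)
    fix r :: real assume "0 < r"
    then have "\<exists>m\<in>{1..}. a m / real m < L + r / 2"
      using cINF_less_iff[OF _ bdd, of "L + r / 2"] by (simp add: L_def)
    then obtain m where m: "1 \<le> m" "a m / real m < L + r / 2" by auto
    obtain N :: nat where N: "2 * (\<Sum>k<m. a k) / r < real N"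
      using reals_Archimedean2 by blast
    have "\<bar>a n / real n - L\<bar> < r" if "Suc N \<le> n" for n
    proof -
      have "2 * (\<Sum>k<m. a k) / r < real n" using N that by linarith
      then have "(\<Sum>k<m. a k) / real n < r / 2"
        using that \<open>0 < r\<close> by (simp add: field_simps)
      then have "a n / real n < L + r"
        using subadditive_div_le[OF nonneg sub, of m n] m that by linarith
      moreover have "L \<le> a n / real n"
        unfolding L_def using that by (intro cINF_lower[OF bdd]) simp
      ultimately show ?thesis by simp
    qed
    then show "\<exists>N. \<forall>n\<ge>N. norm (a n / real n - L) < r" by auto
  qed
  then show ?thesis by (rule convergentI)
qed

lemma quasi_subadditive_div_limit:
  fixes a :: "nat \<Rightarrow> real"
  assumes nonneg: "\<And>n. 0 \<le> a n" and "0 \<le> K"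
    and sub: "\<And>n m. a (n + m) \<le> a n + a m + K"
  shows "convergent (\<lambda>n. a n / real n)" and "lim (\<lambda>n. a n / real n) \<le> a 1 + K"
proof -
  have "convergent (\<lambda>n. (a n + K) / real n)"
  proof (rule Fekete_subadditive_convergent)
    show "0 \<le> a n + K" for n using nonneg[of n] \<open>0 \<le> K\<close> by simp
    show "a (n + m) + K \<le> (a n + K) + (a m + K)" for n m using sub[of n m] by simp
  qed
  moreover have "(\<lambda>n. K / real n) \<longlonglongrightarrow> 0" by (rule lim_const_over_n)
  ultimately have "convergent (\<lambda>n. (a n + K) / real n - K / real n)"
    by (intro convergent_diff) (auto intro: convergentI)
  then show conv: "convergent (\<lambda>n. a n / real n)" by (simp add: add_divide_distrib)
  have linear: "a (Suc n) \<le> real (Suc n) * (a 1 + K)" for n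
  proof (induction n)
    case 0
    show ?case using \<open>0 \<le> K\<close> by simp
  next
    case (Suc n)
    have "a (Suc (Suc n)) \<le> a (Suc n) + a 1 + K" using sub[of "Suc n" 1] by simp
    with Suc show ?case by (simp add: algebra_simps)
  qed
  show "lim (\<lambda>n. a n / real n) \<le> a 1 + K"
  proof (rule LIMSEQ_le_const2)
    show "(\<lambda>n. a n / real n) \<longlonglongrightarrow> lim (\<lambda>n. a n / real n)"
      using conv by (simp add: convergent_LIMSEQ_iff)
    have "a n / real n \<le> a 1 + K" if "1 \<le> n" for n
      using linear[of "n - 1"] that by (simp add: divide_le_eq mult.commute)
    then show "\<exists>N. \<forall>n\<ge>N. a n / real n \<le> a 1 + K" by blast
  qed
qed

section \<open>Conjugation-invariant pseudo-norms and commutators\<close>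

lemma conj_pseudo_norm_nonneg: "conj_pseudo_norm G \<nu> \<Longrightarrow> f \<in> carrier G \<Longrightarrow> 0 \<le> \<nu> f"
  by (simp add: conj_pseudo_norm_def)

lemma conj_pseudo_norm_one: "conj_pseudo_norm G \<nu> \<Longrightarrow> \<nu> \<one>\<^bsub>G\<^esub> = 0"
  by (simp add: conj_pseudo_norm_def)

lemma conj_pseudo_norm_inv:
  "conj_pseudo_norm G \<nu> \<Longrightarrow> f \<in> carrier G \<Longrightarrow> \<nu> (inv\<^bsub>G\<^esub> f) = \<nu> f"
  by (simp add: conj_pseudo_norm_def)

lemma conj_pseudo_norm_triangle:
  "conj_pseudo_norm G \<nu> \<Longrightarrow> f \<in> carrier G \<Longrightarrow> g \<in> carrier G \<Longrightarrow>
    \<nu> (f \<otimes>\<^bsub>G\<^esub> g) \<le> \<nu> f + \<nu> g"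
  by (simp add: conj_pseudo_norm_def)

lemma conj_pseudo_norm_conj:
  "conj_pseudo_norm G \<nu> \<Longrightarrow> f \<in> carrier G \<Longrightarrow> g \<in> carrier G \<Longrightarrow>
    \<nu> (g \<otimes>\<^bsub>G\<^esub> f \<otimes>\<^bsub>G\<^esub> inv\<^bsub>G\<^esub> g) = \<nu> f"
  by (simp add: conj_pseudo_norm_def)

context group
begin

lemma inv_mult_cancel_left [simp]:
  "x \<in> carrier G \<Longrightarrow> y \<in> carrier G \<Longrightarrow> inv x \<otimes> (x \<otimes> y) = y"
  by (simp add: m_assoc[symmetric])

lemma mult_inv_cancel_left [simp]:
  "x \<in> carrier G \<Longrightarrow> y \<in> carrier G \<Longrightarrow> x \<otimes> (inv x \<otimes> y) = y"
  by (simp add: m_assoc[symmetric])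

lemma conj_pseudo_norm_commutator_le_right:
  assumes "conj_pseudo_norm G \<nu>" "p \<in> carrier G" "r \<in> carrier G"
  shows "\<nu> (p \<otimes> r \<otimes> inv p \<otimes> inv r) \<le> 2 * \<nu> r"
proof -
  have "\<nu> (p \<otimes> r \<otimes> inv p \<otimes> inv r) \<le> \<nu> (p \<otimes> r \<otimes> inv p) + \<nu> (inv r)"
    using assms by (intro conj_pseudo_norm_triangle) auto
  also have "\<dots> = 2 * \<nu> r"
    using assms by (simp add: conj_pseudo_norm_conj conj_pseudo_norm_inv)
  finally show ?thesis .
qed

lemma conj_pseudo_norm_commutator_le_left:
  assumes "conj_pseudo_norm G \<nu>" "p \<in> carrier G" "r \<in> carrier G"
  shows "\<nu> (p \<otimes> r \<otimes> inv p \<otimes> inv r) \<le> 2 * \<nu> p"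
proof -
  have "\<nu> (p \<otimes> r \<otimes> inv p \<otimes> inv r) \<le> \<nu> p + \<nu> (r \<otimes> inv p \<otimes> inv r)"
    using assms conj_pseudo_norm_triangle[of G \<nu> p "r \<otimes> inv p \<otimes> inv r"] by (simp add: m_assoc)
  also have "\<dots> = 2 * \<nu> p"
    using assms by (simp add: conj_pseudo_norm_conj conj_pseudo_norm_inv)
  finally show ?thesis .
qed

lemma commutator_eq_if_commute:
  assumes p: "p \<in> carrier G" and q: "q \<in> carrier G" and q': "q' \<in> carrier G"
    and comm: "q' \<otimes> p = p \<otimes> q'"
  shows "p \<otimes> q \<otimes> inv p \<otimes> inv q = p \<otimes> (q \<otimes> inv q') \<otimes> inv p \<otimes> inv (q \<otimes> inv q')"
proof -
  have "inv q' \<otimes> inv p = inv p \<otimes> inv q'"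
    using comm p q' by (metis inv_mult_group)
  then have "inv q' \<otimes> (inv p \<otimes> (q' \<otimes> inv q)) = inv p \<otimes> inv q"
    using p q q' by (simp add: m_assoc[symmetric]) (simp add: m_assoc)
  then show ?thesis using p q q' by (simp add: m_assoc inv_mult_group)
qed

lemma conj_prod_closed:
  "H \<subseteq> carrier G \<Longrightarrow> set ps \<subseteq> carrier G \<times> H \<Longrightarrow> conj_prod G ps \<in> carrier G"
  by (induction ps) (auto simp: conj_prod_def)

lemma conj_prod_Cons [simp]: "conj_prod G ((g, h) # ps) = g \<otimes> h \<otimes> inv g \<otimes> conj_prod G ps"
  by (simp add: conj_prod_def)

lemma conj_prod_commute:
  assumes H: "H \<subseteq> carrier G" and ps: "set ps \<subseteq> carrier G \<times> H" and x: "x \<in> carrier G"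
    and comm: "\<forall>y\<in>(\<Union>g\<in>set (map fst ps). conj_set G g H). x \<otimes> y = y \<otimes> x"
  shows "x \<otimes> conj_prod G ps = conj_prod G ps \<otimes> x"
  using ps comm
proof (induction ps)
  case Nil
  then show ?case using x by (simp add: conj_prod_def)
next
  case (Cons p ps)
  obtain g h where p: "p = (g, h)" by force
  with Cons.prems H have g: "g \<in> carrier G" and h: "h \<in> carrier G" "h \<in> H" by auto
  have P: "conj_prod G ps \<in> carrier G" using conj_prod_closed[OF H] Cons.prems by auto
  have "x \<otimes> (g \<otimes> h \<otimes> inv g) = g \<otimes> h \<otimes> inv g \<otimes> x"
    using Cons.prems(2) h(2) unfolding p conj_set_def by auto
  moreover have "x \<otimes> conj_prod G ps = conj_prod G ps \<otimes> x" using Cons by auto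
  ultimately show ?case
    using x g h P unfolding p conj_prod_Cons by (metis m_assoc m_closed inv_closed)
qed

end

lemma Df_subset_carrier: "Df G H K \<subseteq> carrier G"
  by (auto simp: Df_def)

lemma DfD:
  "h0 \<in> Df G H K \<Longrightarrow> set gs \<subseteq> carrier G \<Longrightarrow>
   \<exists>h\<in>carrier G. \<forall>x\<in>conj_set G (h \<otimes>\<^bsub>G\<^esub> h0 \<otimes>\<^bsub>G\<^esub> inv\<^bsub>G\<^esub> h) K.
          \<forall>y\<in>(\<Union>g\<in>set gs. conj_set G g H). x \<otimes>\<^bsub>G\<^esub> y = y \<otimes>\<^bsub>G\<^esub> x"
  by (simp add: Df_def)

lemma nuH_enatD:
  assumes "nuH G H f = enat k"
  obtains ps where "length ps = k" "set ps \<subseteq> carrier G \<times> H" "f = conj_prod G ps"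
proof -
  let ?A = "{enat (length ps) | ps. set ps \<subseteq> carrier G \<times> H \<and> f = conj_prod G ps}"
  have "?A \<noteq> {}" using assms unfolding nuH_def by (auto simp: Inf_enat_def split: if_splits)
  then obtain x where "x \<in> ?A" by blast
  then have "Inf ?A \<in> ?A" by (rule wellorder_InfI)
  with assms that show ?thesis by (auto simp: nuH_def)
qed

lemma (in group) FM_Df_nonempty:
  assumes "FM G H"
  shows "Df G H H \<noteq> {}"
proof -
  have "H \<subseteq> carrier G" using assms by (simp add: FM_def subgroup.subset)
  then have "conj_set G \<one> H = H" by (force simp: conj_set_def)
  moreover have "Df G H (\<Union>h\<in>set [\<one>]. conj_set G h H) \<noteq> {}"
    using assms unfolding FM_def by (elim conjE allE[of _ "[\<one>]"]) simp
  ultimately show ?thesis by simp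
qed

lemma (in group) FM_commutator_le:
  assumes \<nu>: "conj_pseudo_norm G \<nu>" and fm: "FM G H"
    and h0: "h0 \<in> Df G H H" and p: "p \<in> carrier G" and q: "q \<in> H"
  shows "\<nu> (p \<otimes> q \<otimes> inv p \<otimes> inv q) \<le> 4 * \<nu> h0"
proof -
  have H: "H \<subseteq> carrier G" using fm by (simp add: FM_def subgroup.subset)
  have h0c: "h0 \<in> carrier G" using subsetD[OF Df_subset_carrier h0] .
  have qc: "q \<in> carrier G" using q H by auto
  obtain k where "nuH G H p = enat k" using fm p by (auto simp: FM_def)
  then obtain ps where ps: "set ps \<subseteq> carrier G \<times> H" "p = conj_prod G ps"
    by (rule nuH_enatD)
  have "set (map fst ps) \<subseteq> carrier G" using ps(1) by auto
  then obtain h where h: "h \<in> carrier G" and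
    comm: "\<forall>x\<in>conj_set G (h \<otimes> h0 \<otimes> inv h) H.
             \<forall>y\<in>(\<Union>g\<in>set (map fst ps). conj_set G g H). x \<otimes> y = y \<otimes> x"
    using DfD[OF h0] by blast
  define u where "u = h \<otimes> h0 \<otimes> inv h"
  define r where "r = q \<otimes> inv (u \<otimes> q \<otimes> inv u)"
  have u: "u \<in> carrier G" "\<nu> u = \<nu> h0"
    unfolding u_def using h h0c \<nu> by (auto simp: conj_pseudo_norm_conj)
  have "u \<otimes> q \<otimes> inv u \<in> conj_set G (h \<otimes> h0 \<otimes> inv h) H"
    unfolding u_def conj_set_def using q by blast
  with comm have "\<forall>y\<in>(\<Union>g\<in>set (map fst ps). conj_set G g H).
      u \<otimes> q \<otimes> inv u \<otimes> y = y \<otimes> (u \<otimes> q \<otimes> inv u)"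
    by (rule bspec)
  then have "u \<otimes> q \<otimes> inv u \<otimes> p = p \<otimes> (u \<otimes> q \<otimes> inv u)"
    unfolding ps(2) using u qc by (intro conj_prod_commute[OF H ps(1)]) auto
  then have "p \<otimes> q \<otimes> inv p \<otimes> inv q = p \<otimes> r \<otimes> inv p \<otimes> inv r"
    unfolding r_def using p qc u by (intro commutator_eq_if_commute) auto
  moreover have "\<nu> r \<le> 2 * \<nu> u"
  proof -
    have "r = q \<otimes> u \<otimes> inv q \<otimes> inv u"
      unfolding r_def using qc u by (simp add: m_assoc inv_mult_group)
    then show ?thesis using \<nu> qc u(1) by (simp add: conj_pseudo_norm_commutator_le_right)
  qed
  moreover have "\<nu> (p \<otimes> r \<otimes> inv p \<otimes> inv r) \<le> 2 * \<nu> r"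
    using \<nu> p qc u unfolding r_def by (intro conj_pseudo_norm_commutator_le_right) auto
  ultimately show ?thesis using u by simp
qed

section \<open>Lipschitz linear functionals on words\<close>

lemma word_pow_Nil [simp]: "word_pow G [] n = \<one>\<^bsub>G\<^esub>"
  by (simp add: word_pow_def)

lemma word_pow_Cons:
  "word_pow G ((g, s) # w) n = g [^]\<^bsub>G\<^esub> \<lfloor>s * real n\<rfloor> \<otimes>\<^bsub>G\<^esub> word_pow G w n"
  by (simp add: word_pow_def)

lemma word_pow_Cons_one [simp]:
  "word_pow G ((g, 1) # w) n = g [^]\<^bsub>G\<^esub> n \<otimes>\<^bsub>G\<^esub> word_pow G w n"
  by (simp add: word_pow_Cons int_pow_int)

lemma wbar_Nil [simp]: "wbar [] = []"
  by (simp add: wbar_def)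

lemma wbar_Cons [simp]: "wbar ((g, s) # w) = wbar w @ [(g, - s)]"
  by (simp add: wbar_def)

lemma (in group) word_pow_Cons_minus_one [simp]:
  "g \<in> carrier G \<Longrightarrow> word_pow G ((g, - 1) # w) n = inv (g [^] n) \<otimes> word_pow G w n"
  using int_pow_neg_int[of g n] by (simp add: word_pow_Cons floor_minus)

lemma wnorm_eqI: "(\<lambda>n. \<nu> (word_pow G w n) / real n) \<longlonglongrightarrow> L \<Longrightarrow> wnorm G \<nu> w = L"
  unfolding wnorm_def by (rule limI)

locale lipschitz_functional = group G for G :: "('a, 'b) monoid_scheme" (structure) +
  fixes \<nu> :: "'a \<Rightarrow> real" and \<psi> :: "('a \<times> real) list \<Rightarrow> real"
  assumes pseudo_norm: "conj_pseudo_norm G \<nu>" and functional: "\<psi> \<in> L_Gnu G \<nu>"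
begin

abbreviation \<phi> :: "'a \<Rightarrow> real" where "\<phi> g \<equiv> \<psi> [(g, 1)]"

lemma functional_eqI:
  "word G w \<Longrightarrow> word G w' \<Longrightarrow> wnorm G \<nu> (w @ wbar w') = 0 \<Longrightarrow> \<psi> w = \<psi> w'"
  using functional by (simp add: L_Gnu_def)

lemma functional_append: "word G w \<Longrightarrow> word G w' \<Longrightarrow> \<psi> (w @ w') = \<psi> w + \<psi> w'"
  using functional by (simp add: L_Gnu_def)

lemma functional_scale: "word G w \<Longrightarrow> \<psi> (wscale r w) = r * \<psi> w"
  using functional by (simp add: L_Gnu_def)

lemma functional_lipschitz:
  "is_lip_const G \<nu> \<psi> c \<Longrightarrow> word G w \<Longrightarrow> word G w' \<Longrightarrow>
    \<bar>\<psi> w - \<psi> w'\<bar> \<le> c * wnorm G \<nu> (w @ wbar w')"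
  by (simp add: is_lip_const_def)

lemma \<phi>_conj:
  assumes a: "a \<in> carrier G" and b: "b \<in> carrier G"
  shows "\<phi> (a \<otimes> b \<otimes> inv a) = \<phi> b"
proof (rule functional_eqI)
  let ?w = "[(a \<otimes> b \<otimes> inv a, 1)] @ wbar [(b, 1)]"
  have "(a \<otimes> b \<otimes> inv a) [^] n = a \<otimes> b [^] n \<otimes> inv a" for n :: nat
    by (induction n) (use a b in \<open>simp_all add: m_assoc\<close>)
  then have "word_pow G ?w n = a \<otimes> b [^] n \<otimes> inv a \<otimes> inv (b [^] n)" for n
    using a b by (simp add: m_assoc)
  then have upper: "\<nu> (word_pow G ?w n) / real n \<le> 2 * \<nu> a / real n" for n
    using pseudo_norm a b by (simp add: divide_right_mono conj_pseudo_norm_commutator_le_left)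
  have lower: "0 \<le> \<nu> (word_pow G ?w n) / real n" for n
    using pseudo_norm a b by (simp add: conj_pseudo_norm_nonneg word_def)
  have "(\<lambda>n. \<nu> (word_pow G ?w n) / real n) \<longlonglongrightarrow> 0"
    by (rule tendsto_sandwich[of "\<lambda>_. 0" _ _ "\<lambda>n. 2 * \<nu> a / real n"])
      (use lower upper lim_const_over_n in auto)
  then show "wnorm G \<nu> ?w = 0" by (rule wnorm_eqI)
qed (use a b in \<open>auto simp: word_def\<close>)

lemma \<phi>_pow:
  assumes f: "f \<in> carrier G"
  shows "\<phi> (f [^] (k::int)) = real_of_int k * \<phi> f"
proof -
  have "word_pow G ([(f [^] k, 1)] @ wbar (wscale (real_of_int k) [(f, 1)])) n = \<one>" for n
  proof -
    have "\<lfloor>- (real_of_int k * real n)\<rfloor> = - (k * int n)"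
      by (metis floor_of_int of_int_minus of_int_mult of_int_of_nat_eq)
    moreover have "(f [^] k) [^] int n = f [^] (k * int n)"
      using f by (rule int_pow_pow)
    ultimately show ?thesis
      using f by (simp add: wscale_def word_pow_Cons int_pow_neg)
  qed
  then have "wnorm G \<nu> ([(f [^] k, 1)] @ wbar (wscale (real_of_int k) [(f, 1)])) = 0"
    using conj_pseudo_norm_one[OF pseudo_norm] by (simp add: wnorm_eqI)
  then have "\<phi> (f [^] k) = \<psi> (wscale (real_of_int k) [(f, 1)])"
    using f by (intro functional_eqI) (auto simp: word_def wscale_def)
  also have "\<dots> = real_of_int k * \<phi> f"
    using f by (intro functional_scale) (auto simp: word_def)
  finally show ?thesis .
qed

lemma \<phi>_commute:
  assumes "a \<in> carrier G" "b \<in> carrier G"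
  shows "\<phi> (a \<otimes> b) = \<phi> (b \<otimes> a)"
  using \<phi>_conj[of b "a \<otimes> b"] assms by (simp add: m_assoc)

end

section \<open>The \<open>H\<close>-quasimorphism estimate\<close>

context group
begin

definition pow_defect :: "'a \<Rightarrow> 'a \<Rightarrow> nat \<Rightarrow> 'a" where
  "pow_defect y g n = (y \<otimes> g) [^] n \<otimes> inv (g [^] n) \<otimes> inv (y [^] n)"

lemma pow_defect_closed: "y \<in> carrier G \<Longrightarrow> g \<in> carrier G \<Longrightarrow> pow_defect y g n \<in> carrier G"
  by (simp add: pow_defect_def)

lemma pow_defect_one: "y \<in> carrier G \<Longrightarrow> g \<in> carrier G \<Longrightarrow> pow_defect y g 1 = \<one>"
  by (simp add: pow_defect_def m_assoc inv_mult_group)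

lemma pow_defect_add:
  assumes "y \<in> carrier G" "g \<in> carrier G"
  shows "pow_defect y g (n + m) = pow_defect y g n \<otimes> (y [^] n \<otimes>
     ((g [^] n \<otimes> pow_defect y g m \<otimes> inv (g [^] n)) \<otimes>
      (g [^] n \<otimes> y [^] m \<otimes> inv (g [^] n) \<otimes> inv (y [^] m)))
     \<otimes> inv (y [^] n))"
proof -
  have "(y \<otimes> g) [^] (n + m) = (y \<otimes> g) [^] n \<otimes> (y \<otimes> g) [^] m"
    using assms by (simp add: nat_pow_mult)
  moreover have "inv (g [^] (n + m)) = inv (g [^] m) \<otimes> inv (g [^] n)"
    using assms by (simp add: nat_pow_mult[symmetric] inv_mult_group)
  moreover have "inv (y [^] (n + m)) = inv (y [^] m) \<otimes> inv (y [^] n)"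
    using assms by (simp add: nat_pow_mult[symmetric] inv_mult_group)
  ultimately show ?thesis
    using assms by (simp add: pow_defect_def m_assoc)
qed

lemma word_pow_pow_defect:
  "y \<in> carrier G \<Longrightarrow> g \<in> carrier G \<Longrightarrow>
    word_pow G ([(y \<otimes> g, 1)] @ wbar [(y, 1), (g, 1)]) n = pow_defect y g n"
  by (simp add: pow_defect_def m_assoc)

end

lemma H_quasimorphism_bound_mono:
  "H_quasimorphism_bound G H \<phi> C \<Longrightarrow> C \<le> C' \<Longrightarrow> H_quasimorphism_bound G H \<phi> C'"
  unfolding H_quasimorphism_bound_def by (meson mult_right_mono of_nat_0_le_iff order_trans)

lemma qm_defect_le:
  assumes "H_quasimorphism_bound G H \<phi> C" "0 \<le> C"
  shows "qm_defect G H \<phi> \<le> C"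
proof (rule field_le_epsilon)
  fix d :: real assume "0 < d"
  with assms have "C + d \<in> {C. 0 < C \<and> H_quasimorphism_bound G H \<phi> C}"
    by (auto intro: H_quasimorphism_bound_mono)
  then show "qm_defect G H \<phi> \<le> C + d"
    unfolding qm_defect_def by (rule cInf_lower) (auto intro: bdd_belowI[of _ 0])
qed

lemma le_Inf_mult:
  fixes x b :: real
  assumes "A \<noteq> {}" "\<forall>a\<in>A. 0 \<le> a" "0 \<le> b" "\<forall>a\<in>A. x \<le> a * b"
  shows "x \<le> Inf A * b"
proof (cases "b = 0")
  case True
  with assms show ?thesis by force
next
  case False
  with assms have "x / b \<le> Inf A"
    by (intro cInf_greatest) (auto simp: pos_divide_le_eq)
  with False assms(3) show ?thesis by (simp add: pos_divide_le_eq)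
qed

lemma le_Inf_mult_Inf:
  fixes x :: real
  assumes "A \<noteq> {}" "B \<noteq> {}" "\<forall>a\<in>A. 0 \<le> a" "\<forall>b\<in>B. 0 \<le> b"
    and "\<forall>a\<in>A. \<forall>b\<in>B. x \<le> a * b"
  shows "x \<le> Inf A * Inf B"
proof -
  have "0 \<le> Inf A" using assms by (intro cInf_greatest) auto
  moreover have "\<forall>b\<in>B. x \<le> Inf A * b" using assms by (simp add: le_Inf_mult)
  ultimately have "x \<le> Inf B * Inf A"
    using assms by (intro le_Inf_mult) (auto simp: mult.commute)
  then show ?thesis by (simp add: mult.commute)
qed

locale FM_lipschitz_functional = lipschitz_functional +
  fixes H :: "'a set"
  assumes FM: "FM G H"
begin

lemma nu_Df_nonneg: "h0 \<in> Df G H K \<Longrightarrow> 0 \<le> \<nu> h0"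
  using conj_pseudo_norm_nonneg[OF pseudo_norm subsetD[OF Df_subset_carrier]] .

lemma H_subset: "H \<subseteq> carrier G"
  using FM by (simp add: FM_def subgroup.subset)

lemma pow_in_H: "y \<in> H \<Longrightarrow> y [^] (n::nat) \<in> H"
  using FM by (induction n) (auto simp: FM_def subgroup.one_closed subgroup.m_closed)

lemma nu_pow_defect_add_le:
  assumes h0: "h0 \<in> Df G H H" and y: "y \<in> H" and g: "g \<in> carrier G"
  shows "\<nu> (pow_defect y g (n + m)) \<le> \<nu> (pow_defect y g n) + \<nu> (pow_defect y g m) + 4 * \<nu> h0"
proof -
  have yc: "y \<in> carrier G" using y H_subset by auto
  define C where "C = g [^] n \<otimes> y [^] m \<otimes> inv (g [^] n) \<otimes> inv (y [^] m)"
  define X where "X = g [^] n \<otimes> pow_defect y g m \<otimes> inv (g [^] n) \<otimes> C"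
  have closed: "C \<in> carrier G" "X \<in> carrier G" "\<And>k. pow_defect y g k \<in> carrier G"
    unfolding C_def X_def using yc g by (auto simp: pow_defect_closed)
  have "\<nu> (pow_defect y g (n + m)) = \<nu> (pow_defect y g n \<otimes> (y [^] n \<otimes> X \<otimes> inv (y [^] n)))"
    unfolding X_def C_def using pow_defect_add[OF yc g] by simp
  also have "\<dots> \<le> \<nu> (pow_defect y g n) + \<nu> (y [^] n \<otimes> X \<otimes> inv (y [^] n))"
    using pseudo_norm closed yc by (intro conj_pseudo_norm_triangle) auto
  also have "\<nu> (y [^] n \<otimes> X \<otimes> inv (y [^] n)) = \<nu> X"
    using pseudo_norm closed yc by (simp add: conj_pseudo_norm_conj)
  also have "\<nu> X \<le> \<nu> (g [^] n \<otimes> pow_defect y g m \<otimes> inv (g [^] n)) + \<nu> C"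
    unfolding X_def using pseudo_norm closed g by (intro conj_pseudo_norm_triangle) auto
  also have "\<nu> (g [^] n \<otimes> pow_defect y g m \<otimes> inv (g [^] n)) = \<nu> (pow_defect y g m)"
    using pseudo_norm closed g by (simp add: conj_pseudo_norm_conj)
  also have "\<nu> C \<le> 4 * \<nu> h0"
    unfolding C_def using pseudo_norm FM h0 g pow_in_H[OF y] by (intro FM_commutator_le) auto
  finally show ?thesis by simp
qed

lemma \<phi>_mult_H_le:
  assumes h0: "h0 \<in> Df G H H" and lip: "is_lip_const G \<nu> \<psi> c"
    and y: "y \<in> H" and g: "g \<in> carrier G"
  shows "\<bar>\<phi> (y \<otimes> g) - \<phi> y - \<phi> g\<bar> \<le> 4 * c * \<nu> h0"
proof -
  let ?w = "[(y \<otimes> g, 1)] @ wbar [(y, 1), (g, 1)]"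
  have yc: "y \<in> carrier G" using y H_subset by auto
  have "lim (\<lambda>n. \<nu> (pow_defect y g n) / real n) \<le> \<nu> (pow_defect y g 1) + 4 * \<nu> h0"
    using pseudo_norm yc g nu_Df_nonneg[OF h0]
    by (intro quasi_subadditive_div_limit nu_pow_defect_add_le[OF h0 y g])
      (auto simp: conj_pseudo_norm_nonneg pow_defect_closed)
  then have "wnorm G \<nu> ?w \<le> 4 * \<nu> h0"
    unfolding wnorm_def word_pow_pow_defect[OF yc g] pow_defect_one[OF yc g]
      conj_pseudo_norm_one[OF pseudo_norm] by simp
  moreover have "0 \<le> c" using lip by (simp add: is_lip_const_def)
  ultimately have "c * wnorm G \<nu> ?w \<le> c * (4 * \<nu> h0)" by (rule mult_left_mono)
  moreover have "\<bar>\<phi> (y \<otimes> g) - \<psi> [(y, 1), (g, 1)]\<bar> \<le> c * wnorm G \<nu> ?w"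
    using yc g by (intro functional_lipschitz[OF lip]) (auto simp: word_def)
  moreover have "\<psi> [(y, 1), (g, 1)] = \<phi> y + \<phi> g"
    using functional_append[of "[(y, 1)]" "[(g, 1)]"] yc g by (simp add: word_def)
  ultimately show ?thesis by simp
qed

lemma \<phi>_mult_conj_H_le:
  assumes h0: "h0 \<in> Df G H H" and lip: "is_lip_const G \<nu> \<psi> c"
    and a: "a \<in> carrier G" and q: "q \<in> H" and r: "r \<in> carrier G"
  shows "\<bar>\<phi> (a \<otimes> q \<otimes> inv a \<otimes> r) - \<phi> (a \<otimes> q \<otimes> inv a) - \<phi> r\<bar> \<le> 4 * c * \<nu> h0"
proof -
  have qc: "q \<in> carrier G" using q H_subset by auto
  define r' where "r' = inv a \<otimes> r \<otimes> a"
  have r': "r' \<in> carrier G" "r = a \<otimes> r' \<otimes> inv a"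
    unfolding r'_def using a r by (auto simp: m_assoc)
  have "\<phi> (a \<otimes> q \<otimes> inv a \<otimes> r) = \<phi> (a \<otimes> (q \<otimes> r') \<otimes> inv a)"
    using a qc r' by (simp add: m_assoc)
  moreover have "\<phi> (a \<otimes> (q \<otimes> r') \<otimes> inv a) = \<phi> (q \<otimes> r')"
    using a qc r' by (intro \<phi>_conj) auto
  moreover have "\<phi> (a \<otimes> q \<otimes> inv a) = \<phi> q" using a qc by (rule \<phi>_conj)
  moreover have "\<phi> r = \<phi> r'" using \<phi>_conj[OF a r'(1)] r'(2) by simp
  ultimately show ?thesis using \<phi>_mult_H_le[OF h0 lip q r'(1)] by simp
qed

lemma \<phi>_mult_conj_prod_le:
  assumes h0: "h0 \<in> Df G H H" and lip: "is_lip_const G \<nu> \<psi> c"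
    and ps: "set ps \<subseteq> carrier G \<times> H" and r: "r \<in> carrier G"
  shows "\<bar>\<phi> (conj_prod G ps \<otimes> r) - \<phi> (conj_prod G ps) - \<phi> r\<bar> \<le> 8 * c * \<nu> h0 * length ps"
  using ps
proof (induction ps)
  case Nil
  then show ?case using r \<phi>_pow[of \<one> 0] by (simp add: conj_prod_def)
next
  case (Cons p ps)
  obtain a q where p: "p = (a, q)" by force
  with Cons.prems H_subset have a: "a \<in> carrier G" and q: "q \<in> H" "q \<in> carrier G" by auto
  define F where "F = conj_prod G ps"
  have F: "F \<in> carrier G" unfolding F_def using conj_prod_closed[OF H_subset] Cons.prems by auto
  have "\<bar>\<phi> (a \<otimes> q \<otimes> inv a \<otimes> (F \<otimes> r)) - \<phi> (a \<otimes> q \<otimes> inv a) - \<phi> (F \<otimes> r)\<bar> \<le> 4 * c * \<nu> h0"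
    using F r by (intro \<phi>_mult_conj_H_le[OF h0 lip a q(1)]) auto
  moreover have "\<bar>\<phi> (a \<otimes> q \<otimes> inv a \<otimes> F) - \<phi> (a \<otimes> q \<otimes> inv a) - \<phi> F\<bar> \<le> 4 * c * \<nu> h0"
    using \<phi>_mult_conj_H_le[OF h0 lip a q(1) F] .
  moreover have "\<bar>\<phi> (F \<otimes> r) - \<phi> F - \<phi> r\<bar> \<le> 8 * c * \<nu> h0 * length ps"
    using Cons unfolding F_def by auto
  moreover have "a \<otimes> q \<otimes> inv a \<otimes> F \<otimes> r = a \<otimes> q \<otimes> inv a \<otimes> (F \<otimes> r)"
    using a q F r by (simp add: m_assoc)
  ultimately show ?case unfolding p F_def[symmetric] conj_prod_Cons by (simp add: algebra_simps)
qed

lemma \<phi>_quasimorphism_bound: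
  assumes h0: "h0 \<in> Df G H H" and lip: "is_lip_const G \<nu> \<psi> c"
  shows "H_quasimorphism_bound G H \<phi> (8 * c * \<nu> h0)"
  unfolding H_quasimorphism_bound_def
proof (intro ballI impI)
  fix f g assume f: "f \<in> carrier G" and g: "g \<in> carrier G"
    and "min (nuH G H f) (nuH G H g) \<noteq> \<infinity>"
  then obtain k where k: "min (nuH G H f) (nuH G H g) = enat k" by auto
  have bound: "\<bar>\<phi> (x \<otimes> r) - \<phi> x - \<phi> r\<bar> \<le> 8 * c * \<nu> h0 * k"
    if "nuH G H x = enat k" "r \<in> carrier G" for x r
    using that(1)
  proof (rule nuH_enatD)
    fix ps assume "length ps = k" "set ps \<subseteq> carrier G \<times> H" "x = conj_prod G ps"
    then show ?thesis using \<phi>_mult_conj_prod_le[OF h0 lip _ that(2)] by blast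
  qed
  have "\<bar>\<phi> (f \<otimes> g) - \<phi> f - \<phi> g\<bar> \<le> 8 * c * \<nu> h0 * k"
  proof (cases "nuH G H f \<le> nuH G H g")
    case True
    then show ?thesis using k g bound[of f g] by (simp add: min_def)
  next
    case False
    then show ?thesis using k f g bound[of g f] \<phi>_commute[OF f g] by (simp add: min_def)
  qed
  then show "\<bar>\<phi> (f \<otimes> g) - \<phi> f - \<phi> g\<bar>
      \<le> 8 * c * \<nu> h0 * real (the_enat (min (nuH G H f) (nuH G H g)))"
    using k by simp
qed

lemma lip_const_nu_Df_nonneg:
  "is_lip_const G \<nu> \<psi> c \<Longrightarrow> h0 \<in> Df G H H \<Longrightarrow> 0 \<le> c * \<nu> h0"
  by (simp add: is_lip_const_def nu_Df_nonneg)

lemma \<phi>_H_quasimorphism: "H_quasimorphism G H \<phi>"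
proof -
  obtain c where lip: "is_lip_const G \<nu> \<psi> c" using functional by (auto simp: L_Gnu_def)
  obtain h0 where h0: "h0 \<in> Df G H H" using FM_Df_nonempty[OF FM] by blast
  have "0 \<le> 8 * c * \<nu> h0" using lip_const_nu_Df_nonneg[OF lip h0] by simp
  then show ?thesis unfolding H_quasimorphism_def
    using H_quasimorphism_bound_mono[OF \<phi>_quasimorphism_bound[OF h0 lip]]
    by (intro exI[of _ "8 * c * \<nu> h0 + 1"]) auto
qed

lemma \<phi>_homogeneous: "homogeneous G \<phi>"
  by (simp add: homogeneous_def \<phi>_pow)

lemma \<phi>_qm_defect_le: "qm_defect G H \<phi> \<le> 8 * lip_const G \<nu> \<psi> * E_Hnu G H \<nu> H"
proof -
  have defect_le: "qm_defect G H \<phi> \<le> 8 * c * \<nu> h0"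
    if lip: "is_lip_const G \<nu> \<psi> c" and h0: "h0 \<in> Df G H H" for c h0
    using lip_const_nu_Df_nonneg[OF lip h0]
    by (intro qm_defect_le[OF \<phi>_quasimorphism_bound[OF h0 lip]]) simp
  have bound: "qm_defect G H \<phi> / 8 \<le> c * e"
    if lip: "is_lip_const G \<nu> \<psi> c" and e: "e \<in> \<nu> ` Df G H H" for c e
  proof -
    obtain h0 where h0: "h0 \<in> Df G H H" and "e = \<nu> h0" using e by blast
    then show ?thesis using defect_le[OF lip h0] by (simp add: field_simps)
  qed
  have "qm_defect G H \<phi> / 8 \<le> Inf {c. is_lip_const G \<nu> \<psi> c} * Inf (\<nu> ` Df G H H)"
  proof (rule le_Inf_mult_Inf)
    show "{c. is_lip_const G \<nu> \<psi> c} \<noteq> {}" using functional by (auto simp: L_Gnu_def)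
    show "\<nu> ` Df G H H \<noteq> {}" using FM_Df_nonempty[OF FM] by blast
    show "\<forall>c\<in>{c. is_lip_const G \<nu> \<psi> c}. 0 \<le> c" by (simp add: is_lip_const_def)
    show "\<forall>e\<in>\<nu> ` Df G H H. 0 \<le> e"
      using nu_Df_nonneg by blast
  qed (use bound in blast)
  then show ?thesis by (simp add: lip_const_def E_Hnu_def)
qed

end

theorem proposition2p5:
  fixes G :: "('a, 'b) monoid_scheme" and \<nu> :: "'a \<Rightarrow> real" and H :: "'a set"
    and \<psi> :: "('a \<times> real) list \<Rightarrow> real"
  assumes "group G"
    and "conj_pseudo_norm G \<nu>"
    and "FM G H"
    and "\<psi> \<in> L_Gnu G \<nu>"
  defines "\<phi> \<equiv> (\<lambda>g. \<psi> [(g, 1)])"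
  shows "H_quasimorphism G H \<phi> \<and> homogeneous G \<phi> \<and>
         qm_defect G H \<phi> \<le> 8 * lip_const G \<nu> \<psi> * E_Hnu G H \<nu> H"
proof -
  interpret FM_lipschitz_functional G \<nu> \<psi> H
    using assms by (simp add: FM_lipschitz_functional_def lipschitz_functional_def
        FM_lipschitz_functional_axioms_def lipschitz_functional_axioms_def)
  show ?thesis
    unfolding \<phi>_def using \<phi>_H_quasimorphism \<phi>_homogeneous \<phi>_qm_defect_le by blast
qed

end
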